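(* Let $L\neq0$, $\ell=(L^2)^{1/3}$, and $h<-\frac32\ell$. Then the cubic $f(u)=u^3+2hu^2+2(c+1)u-L^2$ has three distinct positive real roots $0<u_1<u_2<u_3$ if and only if $c\in(C_{1,\xi}(h),C_{2,\xi}(h))$.
   Context: For $h<-\frac32\ell$, let $s_1\in(0,\ell)$ and $s_2\in(\ell,\infty)$ be the unique numbers with $2s_i+L^2/s_i^2=-2h$; then $C_{1,\xi}(h)$ and $C_{2,\xi}(h)$ are defined by $(s_i+2L^2/s_i^2)s_i=2(C_{i,\xi}(h)+1)$, $i=1,2$. (In the spatial Stark problem, three distinct positive roots of $f$ means that the parabolic coordinate $\xi$ has a non-constant periodic motion, $\xi^2$ oscillating between $u_1$ and $u_2$.) *)

theory Defs
  imports Complex_Main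
begin

definition ell :: "real \<Rightarrow> real" where
  "ell L = root 3 (L^2)"

definition s1 :: "real \<Rightarrow> real \<Rightarrow> real" where
  "s1 L h = (THE s. 0 < s \<and> s < ell L \<and> 2 * s + L^2 / s^2 = - 2 * h)"

definition s2 :: "real \<Rightarrow> real \<Rightarrow> real" where
  "s2 L h = (THE s. ell L < s \<and> 2 * s + L^2 / s^2 = - 2 * h)"

definition C1_xi :: "real \<Rightarrow> real \<Rightarrow> real" where
  "C1_xi L h = (s1 L h + 2 * L^2 / (s1 L h)^2) * s1 L h / 2 - 1"

definition C2_xi :: "real \<Rightarrow> real \<Rightarrow> real" where
  "C2_xi L h = (s2 L h + 2 * L^2 / (s2 L h)^2) * s2 L h / 2 - 1"

definition stark_f :: "real \<Rightarrow> real \<Rightarrow> real \<Rightarrow> real \<Rightarrow> real" where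
  "stark_f L h c u = u^3 + 2 * h * u^2 + 2 * (c + 1) * u - L^2"

end

theory Submission
  imports Defs "HOL-Real_Asymp.Real_Asymp"
begin

text \<open>For \<open>u > 0\<close> the cubic factors as \<open>u * \<psi> u\<close>, where
  \<open>\<psi> u = stark_psi L h c u = u^2 + 2 h u + 2 (c + 1) - L^2 / u\<close>, which isolates c in the constant term. Since
  \<open>\<psi>' u = crit (L^2) u + 2 h\<close> with \<open>crit K s = 2 s + K / s^2\<close> decreasing on \<open>(0, \<ell>]\<close>,
  increasing on \<open>[\<ell>, \<infinity>)\<close> and equal to \<open>3 \<ell> < -2 h\<close> at \<open>\<ell>\<close>, the critical points of
  \<open>\<psi>\<close> are exactly s1 and s2: \<open>\<psi>\<close> rises from \<open>-\<infinity>\<close> to a peak at s1, falls to a trough at s2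
  and rises to \<open>+\<infinity>\<close>. So it has three positive zeros iff \<open>\<psi> s1 > 0 > \<psi> s2\<close>, and
  \<open>\<psi> s_i = 2 (c - C_i)\<close> by the defining equations of \<open>s_i\<close> and \<open>C_i\<close>.\<close>

lemma strict_mono_on_if_deriv_pos:
  fixes f f' :: "real \<Rightarrow> real"
  assumes "connected I"
    and deriv: "\<And>x. x \<in> I \<Longrightarrow> (f has_real_derivative f' x) (at x)"
    and pos: "\<And>x y z. x \<in> I \<Longrightarrow> z \<in> I \<Longrightarrow> x < y \<Longrightarrow> y < z \<Longrightarrow> 0 < f' y"
  shows "strict_mono_on I f"
proof (rule strict_mono_onI)
  fix x z assume xz: "x \<in> I" "z \<in> I" "x < z"
  have sub: "{x..z} \<subseteq> I" by (rule connected_contains_Icc[OF assms(1) xz(1,2)])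
  show "f x < f z"
  proof (rule DERIV_pos_imp_increasing_open[OF \<open>x < z\<close>])
    fix y assume "x < y" "y < z"
    then have "y \<in> I" using sub by auto
    then show "\<exists>d. DERIV f y :> d \<and> 0 < d"
      using deriv pos[OF xz(1,2) \<open>x < y\<close> \<open>y < z\<close>] by blast
  next
    show "continuous_on {x..z} f"
      using sub DERIV_isCont[OF deriv] by (intro continuous_at_imp_continuous_on) auto
  qed
qed

lemma strict_antimono_on_if_deriv_neg:
  fixes f f' :: "real \<Rightarrow> real"
  assumes "connected I"
    and "\<And>x. x \<in> I \<Longrightarrow> (f has_real_derivative f' x) (at x)"
    and "\<And>x y z. x \<in> I \<Longrightarrow> z \<in> I \<Longrightarrow> x < y \<Longrightarrow> y < z \<Longrightarrow> f' y < 0"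
  shows "strict_antimono_on I f"
proof -
  have "strict_mono_on I (\<lambda>x. - f x)"
    using assms by (intro strict_mono_on_if_deriv_pos[where f' = "\<lambda>x. - f' x"] DERIV_minus) auto
  then show ?thesis
    by (auto intro!: monotone_onI dest: strict_mono_onD)
qed

lemma three_pos_zeros_iff_peak_pos_trough_neg:
  fixes \<psi> :: "real \<Rightarrow> real"
  assumes "0 < a" "a < b"
    and cont: "continuous_on {0<..} \<psi>"
    and up1: "strict_mono_on {0<..a} \<psi>"
    and down: "strict_antimono_on {a..b} \<psi>"
    and up2: "strict_mono_on {b..} \<psi>"
    and near0: "eventually (\<lambda>u. \<psi> u < 0) (at_right 0)"
    and near_inf: "eventually (\<lambda>u. 0 < \<psi> u) at_top"
  shows "(\<exists>u1 u2 u3. 0 < u1 \<and> u1 < u2 \<and> u2 < u3 \<and> \<psi> u1 = 0 \<and> \<psi> u2 = 0 \<and> \<psi> u3 = 0)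
    \<longleftrightarrow> 0 < \<psi> a \<and> \<psi> b < 0"
proof
  have below_peak: "\<psi> u < \<psi> a" if "0 < u" "u \<le> b" "u \<noteq> a" for u
  proof (cases "u < a")
    case True
    then show ?thesis using up1 that \<open>0 < a\<close> by (auto intro: strict_mono_onD)
  next
    case False
    then show ?thesis using monotone_onD[OF down, of a u] that by auto
  qed
  have above_trough: "\<psi> b < \<psi> u" if "a \<le> u" "u \<noteq> b" for u
  proof (cases "u < b")
    case True
    then show ?thesis using monotone_onD[OF down, of u b] that by auto
  next
    case False
    then show ?thesis using up2 that by (auto intro: strict_mono_onD)
  qed
  assume "\<exists>u1 u2 u3. 0 < u1 \<and> u1 < u2 \<and> u2 < u3 \<and> \<psi> u1 = 0 \<and> \<psi> u2 = 0 \<and> \<psi> u3 = 0"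
  then obtain u1 u2 u3 where u: "0 < u1" "u1 < u2" "u2 < u3" "\<psi> u1 = 0" "\<psi> u2 = 0" "\<psi> u3 = 0"
    by blast
  have "0 < \<psi> a"
  proof (rule ccontr)
    assume "\<not> 0 < \<psi> a"
    then have zero_at_peak: "u = a" if "0 < u" "u \<le> b" "\<psi> u = 0" for u
      using below_peak that by force
    show False
    proof (cases "u2 \<le> b")
      case True
      then show False using zero_at_peak[of u1] zero_at_peak[of u2] u by auto
    next
      case False
      then show False using strict_mono_onD[OF up2, of u2 u3] u by auto
    qed
  qed
  moreover have "\<psi> b < 0"
  proof (rule ccontr)
    assume "\<not> \<psi> b < 0"
    then have zero_at_trough: "u = b" if "a \<le> u" "\<psi> u = 0" for u
      using above_trough that by force
    show False
    proof (cases "a \<le> u2")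
      case True
      then show False using zero_at_trough[of u2] zero_at_trough[of u3] u by auto
    next
      case False
      then show False using strict_mono_onD[OF up1, of u1 u2] u by auto
    qed
  qed
  ultimately show "0 < \<psi> a \<and> \<psi> b < 0" ..
next
  assume peak: "0 < \<psi> a \<and> \<psi> b < 0"
  obtain p where p: "0 < p" "p < a" "\<psi> p < 0"
  proof -
    obtain e where "0 < e" and e: "\<And>u. 0 < u \<Longrightarrow> u < e \<Longrightarrow> \<psi> u < 0"
      using near0 by (auto simp: eventually_at_right_field)
    show ?thesis using e[of "min a e / 2"] \<open>0 < e\<close> \<open>0 < a\<close> by (intro that[of "min a e / 2"]) auto
  qed
  obtain q where q: "b < q" "0 < \<psi> q"
  proof -
    obtain N where "\<And>u. N \<le> u \<Longrightarrow> 0 < \<psi> u"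
      using near_inf by (auto simp: eventually_at_top_linorder)
    then show ?thesis by (intro that[of "max N (b + 1)"]) auto
  qed
  have cont_sub: "continuous_on {x..y} \<psi>" if "0 < x" for x y
    using that by (intro continuous_on_subset[OF cont]) auto
  obtain u1 where u1: "p \<le> u1" "u1 \<le> a" "\<psi> u1 = 0"
    using IVT'[of \<psi> p 0 a, OF _ _ _ cont_sub] p peak by auto
  obtain u2 where u2: "a \<le> u2" "u2 \<le> b" "\<psi> u2 = 0"
    using IVT2'[of \<psi> b 0 a, OF _ _ _ cont_sub] peak \<open>0 < a\<close> \<open>a < b\<close> by auto
  obtain u3 where u3: "b \<le> u3" "u3 \<le> q" "\<psi> u3 = 0"
    using IVT'[of \<psi> b 0 q, OF _ _ _ cont_sub] q peak \<open>0 < a\<close> \<open>a < b\<close> by auto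
  have "u1 \<noteq> a" "u2 \<noteq> a" "u2 \<noteq> b" "u3 \<noteq> b"
    using u1 u2 u3 peak by auto
  with p u1 u2 u3 show "\<exists>u1 u2 u3. 0 < u1 \<and> u1 < u2 \<and> u2 < u3 \<and> \<psi> u1 = 0 \<and> \<psi> u2 = 0 \<and> \<psi> u3 = 0"
    by (intro exI[of _ u1] exI[of _ u2] exI[of _ u3]) auto
qed

definition crit :: "real \<Rightarrow> real \<Rightarrow> real" where
  "crit K s = 2 * s + K / s^2"

lemma crit_has_derivative:
  "0 < s \<Longrightarrow> (crit K has_real_derivative 2 - 2 * K / s^3) (at s)"
  unfolding crit_def
  by (auto intro!: derivative_eq_intros simp: field_simps power2_eq_square power3_eq_cube)

lemma crit_continuous_on: "continuous_on {a..b} (crit K)" if "0 < a"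
  unfolding crit_def using that by (intro continuous_intros) auto

lemma crit_cube_self: "0 < l \<Longrightarrow> crit (l^3) l = 3 * l"
  unfolding crit_def by (simp add: power2_eq_square power3_eq_cube)

lemma crit_strict_antimono_on:
  assumes "0 < l"
  shows "strict_antimono_on {0<..l} (crit (l^3))"
proof (rule strict_antimono_on_if_deriv_neg[where f' = "\<lambda>s. 2 - 2 * l^3 / s^3"])
  show "(crit (l^3) has_real_derivative 2 - 2 * l^3 / x^3) (at x)" if "x \<in> {0<..l}" for x
    using that by (auto intro: crit_has_derivative)
  show "2 - 2 * l^3 / y^3 < 0" if "x \<in> {0<..l}" "z \<in> {0<..l}" "x < y" "y < z" for x y z
  proof -
    have "y^3 < l^3" using that by (intro power_strict_mono) auto
    with that show ?thesis by (simp add: field_simps)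
  qed
qed simp

lemma crit_strict_mono_on:
  assumes "0 < l"
  shows "strict_mono_on {l..} (crit (l^3))"
proof (rule strict_mono_on_if_deriv_pos[where f' = "\<lambda>s. 2 - 2 * l^3 / s^3"])
  show "(crit (l^3) has_real_derivative 2 - 2 * l^3 / x^3) (at x)" if "x \<in> {l..}" for x
    using that assms by (auto intro: crit_has_derivative)
  show "0 < 2 - 2 * l^3 / y^3" if "x \<in> {l..}" "z \<in> {l..}" "x < y" "y < z" for x y z
  proof -
    have "l^3 < y^3" using that assms by (intro power_strict_mono) auto
    with that assms show ?thesis by (simp add: field_simps)
  qed
qed simp

lemma ex1_crit_eq_below:
  assumes "0 < l" "3 * l < H"
  shows "\<exists>!s. 0 < s \<and> s < l \<and> crit (l^3) s = H"
proof -
  define a where "a = l^2 / H"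
  have a: "0 < a" "a < l"
    using assms by (auto simp: a_def field_simps power2_eq_square)
  have "crit (l^3) a = 2 * a + H^2 / l"
    using assms by (simp add: crit_def a_def field_simps power2_eq_square power3_eq_cube)
  moreover have "H \<le> H^2 / l"
    using assms by (simp add: field_simps power2_eq_square)
  ultimately have "H \<le> crit (l^3) a" using a by linarith
  moreover have "crit (l^3) l < H" using assms by (simp add: crit_cube_self)
  ultimately obtain s where s: "a \<le> s" "s \<le> l" "crit (l^3) s = H"
    using IVT2'[of "crit (l^3)" l H a] crit_continuous_on[OF \<open>0 < a\<close>] a by auto
  have inj: "inj_on (crit (l^3)) {0<..l}"
    using crit_strict_antimono_on[OF assms(1)] by (simp add: strict_antimono_iff_antimono)
  show ?thesis
  proof (rule ex1I)
    show "0 < s \<and> s < l \<and> crit (l^3) s = H"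
      using s a \<open>crit (l^3) l < H\<close> by (auto simp: order.order_iff_strict)
    show "t = s" if "0 < t \<and> t < l \<and> crit (l^3) t = H" for t
      using inj_onD[OF inj, of t s] that s a by auto
  qed
qed

lemma ex1_crit_eq_above:
  assumes "0 < l" "3 * l < H"
  shows "\<exists>!s. l < s \<and> crit (l^3) s = H"
proof -
  have "H \<le> crit (l^3) H"
    using assms by (simp add: crit_def)
  moreover have "crit (l^3) l < H" using assms by (simp add: crit_cube_self)
  ultimately obtain s where s: "l \<le> s" "s \<le> H" "crit (l^3) s = H"
    using IVT'[of "crit (l^3)" l H H] crit_continuous_on[OF assms(1)] assms by auto
  have inj: "inj_on (crit (l^3)) {l..}"
    using crit_strict_mono_on[OF assms(1)] by (simp add: strict_mono_iff_mono)
  show ?thesis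
  proof (rule ex1I)
    show "l < s \<and> crit (l^3) s = H"
      using s \<open>crit (l^3) l < H\<close> by (auto simp: order.order_iff_strict)
    show "t = s" if "l < t \<and> crit (l^3) t = H" for t
      using inj_onD[OF inj, of t s] that s by auto
  qed
qed

lemma ell_pos: "L \<noteq> 0 \<Longrightarrow> 0 < ell L"
  unfolding ell_def by simp

lemma ell_cube: "(ell L)^3 = L^2"
  unfolding ell_def by (simp add: odd_real_root_pow)

lemma s1_spec:
  assumes "L \<noteq> 0" "h < - (3/2) * ell L"
  shows "0 < s1 L h" "s1 L h < ell L" "crit (L^2) (s1 L h) = - 2 * h"
proof -
  have "\<exists>!s. 0 < s \<and> s < ell L \<and> crit (L^2) s = - 2 * h"
    using ex1_crit_eq_below[of "ell L" "- 2 * h"] assms ell_pos by (simp add: ell_cube)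
  from theI'[OF this] show "0 < s1 L h" "s1 L h < ell L" "crit (L^2) (s1 L h) = - 2 * h"
    unfolding s1_def crit_def by auto
qed

lemma s2_spec:
  assumes "L \<noteq> 0" "h < - (3/2) * ell L"
  shows "ell L < s2 L h" "crit (L^2) (s2 L h) = - 2 * h"
proof -
  have "\<exists>!s. ell L < s \<and> crit (L^2) s = - 2 * h"
    using ex1_crit_eq_above[of "ell L" "- 2 * h"] assms ell_pos by (simp add: ell_cube)
  from theI'[OF this] show "ell L < s2 L h" "crit (L^2) (s2 L h) = - 2 * h"
    unfolding s2_def crit_def by auto
qed

lemma crit_sign:
  assumes "L \<noteq> 0" "h < - (3/2) * ell L" "0 < u"
  shows "u < s1 L h \<Longrightarrow> - 2 * h < crit (L^2) u"
    and "s1 L h < u \<Longrightarrow> u < s2 L h \<Longrightarrow> crit (L^2) u < - 2 * h"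
    and "s2 L h < u \<Longrightarrow> - 2 * h < crit (L^2) u"
proof -
  note down = crit_strict_antimono_on[OF ell_pos[OF assms(1)], unfolded ell_cube]
  note up = crit_strict_mono_on[OF ell_pos[OF assms(1)], unfolded ell_cube]
  note s1 = s1_spec[OF assms(1,2)] and s2 = s2_spec[OF assms(1,2)]
  show "- 2 * h < crit (L^2) u" if "u < s1 L h"
    using monotone_onD[OF down, of u "s1 L h"] s1 that assms(3) by auto
  show "crit (L^2) u < - 2 * h" if "s1 L h < u" "u < s2 L h"
  proof (cases "u \<le> ell L")
    case True
    then show ?thesis using monotone_onD[OF down, of "s1 L h" u] s1 that by auto
  next
    case False
    then show ?thesis using monotone_onD[OF up, of u "s2 L h"] s2 that by auto
  qed
  show "- 2 * h < crit (L^2) u" if "s2 L h < u"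
    using monotone_onD[OF up, of "s2 L h" u] s2 that by auto
qed

definition stark_psi :: "real \<Rightarrow> real \<Rightarrow> real \<Rightarrow> real \<Rightarrow> real" where
  "stark_psi L h c u = u^2 + 2 * h * u + 2 * (c + 1) - L^2 / u"

lemma stark_f_eq_0_iff_stark_psi_eq_0:
  assumes "0 < u"
  shows "stark_f L h c u = 0 \<longleftrightarrow> stark_psi L h c u = 0"
proof -
  have "stark_f L h c u = u * stark_psi L h c u"
    using assms by (simp add: stark_f_def stark_psi_def field_simps power2_eq_square power3_eq_cube)
  with assms show ?thesis by simp
qed

lemma stark_psi_has_derivative:
  "0 < u \<Longrightarrow> (stark_psi L h c has_real_derivative crit (L^2) u + 2 * h) (at u)"
  unfolding stark_psi_def crit_def
  by (auto intro!: derivative_eq_intros simp: field_simps power2_eq_square)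

lemma stark_psi_continuous_on: "continuous_on {0<..} (stark_psi L h c)"
  unfolding stark_psi_def by (intro continuous_intros) auto

lemma stark_psi_at_crit:
  assumes "0 < s" "crit (L^2) s = - 2 * h"
  shows "stark_psi L h c s = 2 * (c - ((s + 2 * L^2 / s^2) * s / 2 - 1))"
proof -
  have q: "L^2 / s^2 = - 2 * s - 2 * h"
    using assms(2) by (simp add: crit_def)
  have "L^2 / s = s * (L^2 / s^2)"
    using assms(1) by (simp add: field_simps power2_eq_square)
  also have "\<dots> = - 2 * s^2 - 2 * h * s"
    unfolding q by (simp add: algebra_simps power2_eq_square)
  finally have Ls: "L^2 / s = - 2 * s^2 - 2 * h * s" .
  have "(s + 2 * L^2 / s^2) * s / 2 - 1 = s^2 / 2 + L^2 / s - 1"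
    using assms(1) by (simp add: field_simps power2_eq_square)
  also have "\<dots> = - 3/2 * s^2 - 2 * h * s - 1"
    unfolding Ls by linarith
  finally have C: "(s + 2 * L^2 / s^2) * s / 2 - 1 = - 3/2 * s^2 - 2 * h * s - 1" .
  show ?thesis
    unfolding stark_psi_def Ls C by (simp add: algebra_simps)
qed

lemma stark_psi_shape:
  assumes "L \<noteq> 0" "h < - (3/2) * ell L"
  shows "strict_mono_on {0<..s1 L h} (stark_psi L h c)"
    and "strict_antimono_on {s1 L h..s2 L h} (stark_psi L h c)"
    and "strict_mono_on {s2 L h..} (stark_psi L h c)"
proof -
  note s1 = s1_spec[OF assms] and s2 = s2_spec[OF assms]
  show "strict_mono_on {0<..s1 L h} (stark_psi L h c)"
  proof (rule strict_mono_on_if_deriv_pos[where f' = "\<lambda>u. crit (L^2) u + 2 * h"])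
    show "(stark_psi L h c has_real_derivative crit (L^2) x + 2 * h) (at x)"
      if "x \<in> {0<..s1 L h}" for x
      using that by (auto intro: stark_psi_has_derivative)
    show "0 < crit (L^2) y + 2 * h"
      if "x \<in> {0<..s1 L h}" "z \<in> {0<..s1 L h}" "x < y" "y < z" for x y z
      using crit_sign(1)[OF assms, of y] that by auto
  qed simp
  show "strict_antimono_on {s1 L h..s2 L h} (stark_psi L h c)"
  proof (rule strict_antimono_on_if_deriv_neg[where f' = "\<lambda>u. crit (L^2) u + 2 * h"])
    show "(stark_psi L h c has_real_derivative crit (L^2) x + 2 * h) (at x)"
      if "x \<in> {s1 L h..s2 L h}" for x
      using that s1 by (auto intro: stark_psi_has_derivative)
    show "crit (L^2) y + 2 * h < 0"
      if "x \<in> {s1 L h..s2 L h}" "z \<in> {s1 L h..s2 L h}" "x < y" "y < z" for x y z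
      using crit_sign(2)[OF assms, of y] that s1 by auto
  qed simp
  show "strict_mono_on {s2 L h..} (stark_psi L h c)"
  proof (rule strict_mono_on_if_deriv_pos[where f' = "\<lambda>u. crit (L^2) u + 2 * h"])
    show "(stark_psi L h c has_real_derivative crit (L^2) x + 2 * h) (at x)"
      if "x \<in> {s2 L h..}" for x
      using that s1 s2 by (auto intro: stark_psi_has_derivative)
    show "0 < crit (L^2) y + 2 * h"
      if "x \<in> {s2 L h..}" "z \<in> {s2 L h..}" "x < y" "y < z" for x y z
      using crit_sign(3)[OF assms, of y] that s1 s2 by auto
  qed simp
qed

lemma stark_psi_neg_near_0: "L \<noteq> 0 \<Longrightarrow> eventually (\<lambda>u. stark_psi L h c u < 0) (at_right 0)"
  unfolding stark_psi_def by real_asymp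

lemma stark_psi_pos_near_infinity: "eventually (\<lambda>u. 0 < stark_psi L h c u) at_top"
  unfolding stark_psi_def by real_asymp

theorem proposition5p2:
  fixes L h c :: real
  assumes "L \<noteq> 0"
    and "h < - (3/2) * ell L"
  shows "(\<exists>u1 u2 u3. 0 < u1 \<and> u1 < u2 \<and> u2 < u3 \<and>
            stark_f L h c u1 = 0 \<and> stark_f L h c u2 = 0 \<and> stark_f L h c u3 = 0)
         \<longleftrightarrow> (C1_xi L h < c \<and> c < C2_xi L h)"
proof -
  note s1 = s1_spec[OF assms] and s2 = s2_spec[OF assms]
  have "s1 L h < s2 L h" using s1(2) s2(1) by linarith
  have "(\<exists>u1 u2 u3. 0 < u1 \<and> u1 < u2 \<and> u2 < u3 \<and>
            stark_f L h c u1 = 0 \<and> stark_f L h c u2 = 0 \<and> stark_f L h c u3 = 0)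
    \<longleftrightarrow> (\<exists>u1 u2 u3. 0 < u1 \<and> u1 < u2 \<and> u2 < u3 \<and>
            stark_psi L h c u1 = 0 \<and> stark_psi L h c u2 = 0 \<and> stark_psi L h c u3 = 0)"
    by (intro ex_cong1 conj_cong refl) (auto simp: stark_f_eq_0_iff_stark_psi_eq_0)
  also have "\<dots> \<longleftrightarrow> 0 < stark_psi L h c (s1 L h) \<and> stark_psi L h c (s2 L h) < 0"
    by (rule three_pos_zeros_iff_peak_pos_trough_neg[OF s1(1) \<open>s1 L h < s2 L h\<close>
          stark_psi_continuous_on stark_psi_shape[OF assms]
          stark_psi_neg_near_0[OF assms(1)] stark_psi_pos_near_infinity])
  also have "\<dots> \<longleftrightarrow> C1_xi L h < c \<and> c < C2_xi L h"
  proof -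
    have "stark_psi L h c (s1 L h) = 2 * (c - C1_xi L h)"
      unfolding C1_xi_def by (rule stark_psi_at_crit[OF s1(1,3)])
    moreover have "stark_psi L h c (s2 L h) = 2 * (c - C2_xi L h)"
      unfolding C2_xi_def by (rule stark_psi_at_crit[OF _ s2(2)]) (use s1 s2 in linarith)
    ultimately show ?thesis by simp
  qed
  finally show ?thesis .
qed

end
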